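(* Let $q_1, q_2$ be real numbers with $0< q_1, q_2 \leq 1$ and let $m,n$ be integers such that $q_1m$ and $q_2n$ are integers. If $H$ is a connected signed bipartite graph, then $$z(m, n, H) \geq \frac{1}{2\max\{q_1, q_2\}}\, z(q_1m, q_2n, H).$$
   Context: A signed bipartite graph is a bipartite graph with a proper vertex 2-colouring by $+$ and $-$. $z(m,n,H)$ is the maximum number of edges in a signed bipartite graph with $+$ class of size $m$ and $-$ class of size $n$ containing no copy of $H$ with $+$ vertices mapped into the $+$ class and $-$ vertices into the $-$ class. *)

theory Defs
  imports Main Complex_Main
begin

text \<open>A signed bipartite graph H is given by its + class P, its - class N and
an edge set E \<subseteq> P \<times> N.\<close>

definition signed_bip :: "'a set \<Rightarrow> 'b set \<Rightarrow> ('a \<times> 'b) set \<Rightarrow> bool" where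
  "signed_bip P N E \<longleftrightarrow> finite P \<and> finite N \<and> E \<subseteq> P \<times> N"

definition sb_adj :: "('a \<times> 'b) set \<Rightarrow> ('a + 'b) \<Rightarrow> ('a + 'b) \<Rightarrow> bool" where
  "sb_adj E u v \<longleftrightarrow> (\<exists>a b. (a, b) \<in> E \<and> ((u = Inl a \<and> v = Inr b) \<or> (u = Inr b \<and> v = Inl a)))"

definition sb_connected :: "'a set \<Rightarrow> 'b set \<Rightarrow> ('a \<times> 'b) set \<Rightarrow> bool" where
  "sb_connected P N E \<longleftrightarrow> P <+> N \<noteq> {} \<and>
     (\<forall>u \<in> P <+> N. \<forall>v \<in> P <+> N. (sb_adj E)\<^sup>*\<^sup>* u v)"

definition contains_copy ::
  "(nat \<times> nat) set \<Rightarrow> nat \<Rightarrow> nat \<Rightarrow> 'a set \<Rightarrow> 'b set \<Rightarrow> ('a \<times> 'b) set \<Rightarrow> bool" where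
  "contains_copy F m n P N E \<longleftrightarrow>
     (\<exists>f g. inj_on f P \<and> f ` P \<subseteq> {0..<m} \<and> inj_on g N \<and> g ` N \<subseteq> {0..<n} \<and>
            (\<forall>(a, b) \<in> E. (f a, g b) \<in> F))"

text \<open>z(m,n,H): maximum number of edges of an H-free signed bipartite graph
with + class of size m and - class of size n (0 if no such graph exists).\<close>
definition zfun :: "nat \<Rightarrow> nat \<Rightarrow> 'a set \<Rightarrow> 'b set \<Rightarrow> ('a \<times> 'b) set \<Rightarrow> nat" where
  "zfun m n P N E = Sup {card F | F. F \<subseteq> {0..<m} \<times> {0..<n} \<and> \<not> contains_copy F m n P N E}"

end

theory Submission
  imports Defs
begin

text \<open>Place k = min (m div m') (n div n') vertex-disjoint copies of an extremal H-free
graph on m' + and n' - vertices along the diagonal of the m \<times> n host.  Since H is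
connected, every copy of H in this union lies inside a single block, and reducing
vertex labels modulo m' and n' moves it into the extremal graph itself; so the union
is H-free and has k \<cdot> z(m',n',H) edges.  Finally m div m' = \<lfloor>1/q1\<rfloor> \<ge> 1/(2 q1)
because 1/q1 \<ge> 1, and likewise for n.\<close>

lemma finite_zfun_cards:
  "finite {card F | F. F \<subseteq> {0..<m} \<times> {0..<n} \<and> \<not> contains_copy F m n P N E}"
proof -
  have "{F. F \<subseteq> {0..<m} \<times> {0..<n} \<and> \<not> contains_copy F m n P N E} \<subseteq> Pow ({0..<m} \<times> {0..<n})"
    by blast
  then have "finite {F. F \<subseteq> {0..<m} \<times> {0..<n} \<and> \<not> contains_copy F m n P N E}"
    by (rule finite_subset) simp
  then show ?thesis
    by (simp add: setcompr_eq_image)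
qed

lemma card_le_zfun:
  assumes "F \<subseteq> {0..<m} \<times> {0..<n}" "\<not> contains_copy F m n P N E"
  shows "card F \<le> zfun m n P N E"
  unfolding zfun_def
  using assms finite_zfun_cards[of m n P N E] by (auto intro: cSup_upper simp: bdd_above_nat)

lemma zfun_attained:
  assumes "zfun m n P N E > 0"
  obtains F where "F \<subseteq> {0..<m} \<times> {0..<n}" "\<not> contains_copy F m n P N E"
    "card F = zfun m n P N E"
proof -
  let ?S = "{card F | F. F \<subseteq> {0..<m} \<times> {0..<n} \<and> \<not> contains_copy F m n P N E}"
  have "?S \<noteq> {}"
  proof
    assume "?S = {}"
    then have "zfun m n P N E = 0"
      unfolding zfun_def by (simp add: Sup_nat_def)
    with assms show False
      by simp
  qed
  then have z: "zfun m n P N E = Max ?S"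
    unfolding zfun_def Sup_nat_def by (rule if_not_P)
  have "Max ?S \<in> ?S"
    by (rule Max_in[OF finite_zfun_cards \<open>?S \<noteq> {}\<close>])
  then obtain F where "Max ?S = card F" "F \<subseteq> {0..<m} \<times> {0..<n}" "\<not> contains_copy F m n P N E"
    by blast
  then show ?thesis
    using that z by simp
qed

lemma sb_connected_constant:
  assumes "sb_connected P N E" and "\<And>u v. sb_adj E u v \<Longrightarrow> \<phi> u = \<phi> v"
    and "u \<in> P <+> N" "v \<in> P <+> N"
  shows "\<phi> u = \<phi> v"
proof -
  have "(sb_adj E)\<^sup>*\<^sup>* u v"
    using assms(1,3,4) unfolding sb_connected_def by blast
  then show ?thesis
    by (induction rule: rtranclp_induct) (auto dest: assms(2))
qed

definition diagonal_blocks :: "nat \<Rightarrow> nat \<Rightarrow> nat \<Rightarrow> (nat \<times> nat) set \<Rightarrow> (nat \<times> nat) set" where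
  "diagonal_blocks k m' n' F' = (\<lambda>(i, x, y). (i * m' + x, i * n' + y)) ` ({..<k} \<times> F')"

lemma mem_diagonal_blocks:
  assumes "F' \<subseteq> {0..<m'} \<times> {0..<n'}"
  shows "(a, b) \<in> diagonal_blocks k m' n' F' \<longleftrightarrow>
    a div m' = b div n' \<and> a div m' < k \<and> (a mod m', b mod n') \<in> F'"
proof
  assume "(a, b) \<in> diagonal_blocks k m' n' F'"
  then obtain i x y where "i < k" "(x, y) \<in> F'" "a = i * m' + x" "b = i * n' + y"
    unfolding diagonal_blocks_def by auto
  moreover have "x < m'" "y < n'"
    using assms \<open>(x, y) \<in> F'\<close> by auto
  ultimately show "a div m' = b div n' \<and> a div m' < k \<and> (a mod m', b mod n') \<in> F'"
    by auto
next
  assume a: "a div m' = b div n' \<and> a div m' < k \<and> (a mod m', b mod n') \<in> F'"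
  then have "(a, b) = (\<lambda>(i, x, y). (i * m' + x, i * n' + y)) (a div m', a mod m', b mod n')"
    using div_mult_mod_eq[of a m'] div_mult_mod_eq[of b n'] by simp
  with a show "(a, b) \<in> diagonal_blocks k m' n' F'"
    unfolding diagonal_blocks_def by blast
qed

lemma card_diagonal_blocks:
  assumes "F' \<subseteq> {0..<m'} \<times> {0..<n'}"
  shows "card (diagonal_blocks k m' n' F') = k * card F'"
proof -
  have "inj_on (\<lambda>(i, x, y). (i * m' + x, i * n' + y)) ({..<k} \<times> F')"
  proof (rule inj_onI)
    fix p p'
    assume "p \<in> {..<k} \<times> F'" "p' \<in> {..<k} \<times> F'"
      and eq: "(\<lambda>(i, x, y). (i * m' + x, i * n' + y)) p = (\<lambda>(i, x, y). (i * m' + x, i * n' + y)) p'"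
    moreover obtain i x y j u v where "p = (i, x, y)" "p' = (j, u, v)"
      by (metis prod_cases3)
    ultimately have "x < m'" "u < m'" "i * m' + x = j * m' + u" "i * n' + y = j * n' + v"
      using assms by auto
    have "i = (i * m' + x) div m'" "j = (j * m' + u) div m'"
      using \<open>x < m'\<close> \<open>u < m'\<close> by simp_all
    then have "i = j"
      using \<open>i * m' + x = j * m' + u\<close> by simp
    with \<open>p = (i, x, y)\<close> \<open>p' = (j, u, v)\<close> \<open>i * n' + y = j * n' + v\<close> \<open>i * m' + x = j * m' + u\<close>
    show "p = p'"
      by simp
  qed
  moreover have "finite F'"
    using assms finite_subset by blast
  ultimately show ?thesis
    unfolding diagonal_blocks_def by (simp add: card_image card_cartesian_product)
qed

lemma diagonal_blocks_subset:
  assumes "F' \<subseteq> {0..<m'} \<times> {0..<n'}" "k * m' \<le> m" "k * n' \<le> n"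
  shows "diagonal_blocks k m' n' F' \<subseteq> {0..<m} \<times> {0..<n}"
proof clarify
  fix a b
  assume "(a, b) \<in> diagonal_blocks k m' n' F'"
  then have "a div m' < k" "b div n' < k" "(a mod m', b mod n') \<in> F'"
    using mem_diagonal_blocks[OF assms(1)] by auto
  moreover have "0 < m'" "0 < n'"
    using assms(1) \<open>(a mod m', b mod n') \<in> F'\<close> by auto
  ultimately have "a < k * m'" "b < k * n'"
    by (simp_all add: div_less_iff_less_mult)
  with assms(2,3) show "a \<in> {0..<m} \<and> b \<in> {0..<n}"
    by simp
qed

lemma contains_copy_diagonal_blocks_imp:
  assumes conn: "sb_connected P N E" and "0 < m'" "0 < n'"
    and F': "F' \<subseteq> {0..<m'} \<times> {0..<n'}"
    and "contains_copy (diagonal_blocks k m' n' F') m n P N E"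
  shows "contains_copy F' m' n' P N E"
proof -
  obtain f g where inj: "inj_on f P" "inj_on g N"
    and edges: "\<forall>(a, b) \<in> E. (f a, g b) \<in> diagonal_blocks k m' n' F'"
    using assms(5) unfolding contains_copy_def by blast
  define block where "block = case_sum (\<lambda>a. f a div m') (\<lambda>b. g b div n')"
  have "block u = block v" if "sb_adj E u v" for u v
    using that edges mem_diagonal_blocks[OF F'] unfolding sb_adj_def block_def by fastforce
  then have same_block: "block u = block v" if "u \<in> P <+> N" "v \<in> P <+> N" for u v
    using sb_connected_constant[OF conn] that by blast
  have "inj_on (\<lambda>a. f a mod m') P"
  proof (rule inj_onI)
    fix a a' assume "a \<in> P" "a' \<in> P" "f a mod m' = f a' mod m'"
    moreover have "f a div m' = f a' div m'"
      using same_block[of "Inl a" "Inl a'"] \<open>a \<in> P\<close> \<open>a' \<in> P\<close> unfolding block_def by auto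
    ultimately show "a = a'"
      using inj(1) div_mod_decomp[of "f a" m'] div_mod_decomp[of "f a'" m'] by (metis inj_onD)
  qed
  moreover have "inj_on (\<lambda>b. g b mod n') N"
  proof (rule inj_onI)
    fix b b' assume "b \<in> N" "b' \<in> N" "g b mod n' = g b' mod n'"
    moreover have "g b div n' = g b' div n'"
      using same_block[of "Inr b" "Inr b'"] \<open>b \<in> N\<close> \<open>b' \<in> N\<close> unfolding block_def by auto
    ultimately show "b = b'"
      using inj(2) div_mod_decomp[of "g b" n'] div_mod_decomp[of "g b'" n'] by (metis inj_onD)
  qed
  moreover have "\<forall>(a, b) \<in> E. (f a mod m', g b mod n') \<in> F'"
    using edges mem_diagonal_blocks[OF F'] by blast
  ultimately show ?thesis
    unfolding contains_copy_def using \<open>0 < m'\<close> \<open>0 < n'\<close>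
    by (intro exI[of _ "\<lambda>a. f a mod m'"] exI[of _ "\<lambda>b. g b mod n'"]) auto
qed

lemma ratio_le_twice_div:
  fixes m d :: nat
  assumes "0 < d" "d \<le> m"
  shows "real m / real d \<le> 2 * real (m div d)"
proof -
  have "0 < m div d"
    using assms by (simp add: div_greater_zero_iff)
  have "m < m div d * d + d"
    using div_mult_mod_eq[of m d] mod_less_divisor[OF assms(1), of m] by linarith
  then have "real m < real (m div d) * real d + real d"
    by (metis of_nat_add of_nat_less_iff of_nat_mult)
  then have "real m / real d < real (m div d) + 1"
    using assms(1) by (simp add: divide_less_eq distrib_right)
  with \<open>0 < m div d\<close> show ?thesis
    by linarith
qed

lemma inverse_twice_le_div:
  fixes q :: real and m m' :: nat
  assumes "0 < q" "q \<le> 1" "real m' = q * real m" "0 < m'"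
  shows "1 / (2 * q) \<le> real (m div m')"
proof -
  have "0 < m"
  proof (rule ccontr)
    assume "\<not> 0 < m"
    with assms(3,4) show False
      by simp
  qed
  then have "1 / q = real m / real m'"
    using assms(1,3) by (simp add: field_simps)
  moreover have "m' \<le> m"
    using assms mult_right_mono[of q 1 "real m"] by simp
  ultimately have "1 / q \<le> 2 * real (m div m')"
    using ratio_le_twice_div[OF assms(4)] by simp
  then show ?thesis
    using assms(1) by (simp add: field_simps)
qed

theorem lemma4p2:
  fixes q1 q2 :: real and m n m' n' :: nat
    and P :: "'a set" and N :: "'b set" and E :: "('a \<times> 'b) set"
  assumes "0 < q1" "q1 \<le> 1" "0 < q2" "q2 \<le> 1"
    and "real m' = q1 * real m" "real n' = q2 * real n"
    and "signed_bip P N E" "sb_connected P N E"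
  shows "real (zfun m n P N E) \<ge> 1 / (2 * max q1 q2) * real (zfun m' n' P N E)"
proof (cases "zfun m' n' P N E = 0")
  case False
  then obtain F' where F': "F' \<subseteq> {0..<m'} \<times> {0..<n'}" and free: "\<not> contains_copy F' m' n' P N E"
    and card_F': "card F' = zfun m' n' P N E"
    using zfun_attained[of m' n' P N E] by auto
  then have "F' \<noteq> {}"
    using False by auto
  then obtain x y where "(x, y) \<in> F'"
    by auto
  then have "0 < m'" "0 < n'"
    using F' by auto
  define k where "k = min (m div m') (n div n')"
  have "k * m' \<le> m" "k * n' \<le> n"
    unfolding k_def by (meson div_times_less_eq_dividend le_trans min.cobounded1 min.cobounded2 mult_le_mono1)+
  moreover have "\<not> contains_copy (diagonal_blocks k m' n' F') m n P N E"
    using contains_copy_diagonal_blocks_imp[OF assms(8) \<open>0 < m'\<close> \<open>0 < n'\<close> F'] free by blast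
  ultimately have "card (diagonal_blocks k m' n' F') \<le> zfun m n P N E"
    by (intro card_le_zfun diagonal_blocks_subset[OF F'])
  then have "real k * real (zfun m' n' P N E) \<le> real (zfun m n P N E)"
    using card_diagonal_blocks[OF F'] card_F' by (metis of_nat_le_iff of_nat_mult)
  moreover have "1 / (2 * max q1 q2) \<le> real k"
    using inverse_twice_le_div[OF assms(1,2,5) \<open>0 < m'\<close>] inverse_twice_le_div[OF assms(3,4,6) \<open>0 < n'\<close>]
      frac_le[of 1 1 "2 * q1" "2 * max q1 q2"] frac_le[of 1 1 "2 * q2" "2 * max q1 q2"] assms(1,3)
    unfolding k_def by auto
  ultimately show ?thesis
    using mult_right_mono[of "1 / (2 * max q1 q2)" "real k" "real (zfun m' n' P N E)"] by simp
qed simp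

end
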